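(* Let $\mathbf{x}\in\mathrm{Gol}^{\triangle}_d\cap\mathcal{S}$. Then $x_{d-1}\leq 1$.
   Context: Fix $\epsilon,\gamma$ with $0<4\gamma<\epsilon<\frac12$. The Goldfarb cube $\mathrm{Gol}_d\subseteq\mathbb{R}^d$ is the set of $\mathbf{x}$ satisfying $-z_1\le x_1\le z_1:=1$, $-z_2\le x_2\le z_2:=1-\epsilon-\epsilon x_1$, and $-z_k\le x_k\le z_k:=1-\epsilon+\epsilon\gamma-\epsilon(x_{k-1}-\gamma x_{k-2})$ for $3\le k\le d$. Its vertices are $\mathbf{v}_\sigma$, $\sigma\in\{-1,1\}^d$, where $\mathbf{v}_\sigma$ is given by $x_1=\sigma_1$, $x_2=\sigma_2(1-\epsilon-\epsilon x_1)$, $x_k=\sigma_k(1-\epsilon+\epsilon\gamma-\epsilon(x_{k-1}-\gamma x_{k-2}))$ for $k\ge3$. The dual Goldfarb cube is $\mathrm{Gol}^{\triangle}_d=\bigcap_{\tau\in\{-1,1\}^d}\{\mathbf{x}\in\mathbb{R}^d:\mathbf{v}_\tau^T\mathbf{x}\le 1\}$. Let $\mathcal{S}:=\{\mathbf{x}\in\mathbb{R}^d: x_1=\ldots=x_{d-2}=0\}$. *)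

theory Defs
  imports Main "HOL-Library.Sum_of_Squares" Complex_Main
begin

text \<open>Vectors in R^d are represented as functions nat => real, using coordinates 1..d.
  A sign vector sigma in {-1,1}^d is a function nat => real with sigma k in {-1,1} for k in 1..d.\<close>

fun gol_vertex :: "real \<Rightarrow> real \<Rightarrow> (nat \<Rightarrow> real) \<Rightarrow> nat \<Rightarrow> real" where
  "gol_vertex eps gam sigma 0 = 0"
| "gol_vertex eps gam sigma (Suc 0) = sigma 1"
| "gol_vertex eps gam sigma (Suc (Suc 0)) =
     sigma 2 * (1 - eps - eps * gol_vertex eps gam sigma 1)"
| "gol_vertex eps gam sigma (Suc (Suc (Suc k))) =
     sigma (k + 3) * (1 - eps + eps * gam
        - eps * (gol_vertex eps gam sigma (k + 2) - gam * gol_vertex eps gam sigma (k + 1)))"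

definition sign_vectors :: "nat \<Rightarrow> (nat \<Rightarrow> real) set" where
  "sign_vectors d = {sigma. \<forall>k\<in>{1..d}. sigma k = -1 \<or> sigma k = 1}"

definition gol_cube :: "real \<Rightarrow> real \<Rightarrow> nat \<Rightarrow> (nat \<Rightarrow> real) set" where
  "gol_cube eps gam d = {x.
     (1 \<le> d \<longrightarrow> \<bar>x 1\<bar> \<le> 1) \<and>
     (2 \<le> d \<longrightarrow> \<bar>x 2\<bar> \<le> 1 - eps - eps * x 1) \<and>
     (\<forall>k\<in>{3..d}. \<bar>x k\<bar> \<le> 1 - eps + eps * gam - eps * (x (k - 1) - gam * x (k - 2)))}"

definition dual_gol_cube :: "real \<Rightarrow> real \<Rightarrow> nat \<Rightarrow> (nat \<Rightarrow> real) set" where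
  "dual_gol_cube eps gam d = {x. \<forall>tau\<in>sign_vectors d.
      (\<Sum>k=1..d. gol_vertex eps gam tau k * x k) \<le> 1}"

definition subspace_S :: "nat \<Rightarrow> (nat \<Rightarrow> real) set" where
  "subspace_S d = {x. \<forall>k\<in>{1..d-2}. x k = 0}"

end

theory Submission
  imports Defs
begin

text \<open>Take the vertices \<open>v\<^sub>\<tau>\<close> with \<open>\<tau>\<^sub>i = -1\<close> for \<open>i < d-1\<close>, \<open>\<tau>\<^sub>d\<^sub>-\<^sub>1 = 1\<close> and
  \<open>\<tau>\<^sub>d = \<pm>1\<close>. Along the all-minus sign vector every coordinate of the vertex is \<open>-1\<close>, so the
  slack defining coordinate \<open>d-1\<close> equals \<open>1\<close>, and flipping \<open>\<tau>\<^sub>d\<^sub>-\<^sub>1\<close> gives \<open>(v\<^sub>\<tau>)\<^sub>d\<^sub>-\<^sub>1 = 1\<close>.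
  On \<open>\<S>\<close> the two dual constraints read \<open>x\<^sub>d\<^sub>-\<^sub>1 \<pm> w x\<^sub>d \<le> 1\<close> for one number \<open>w\<close>;
  their average is the claim.\<close>

lemma gol_vertex_fun_upd_below:
  "j < k \<Longrightarrow> gol_vertex eps gam (sigma(k := c)) j = gol_vertex eps gam sigma j"
  by (induction eps gam sigma j rule: gol_vertex.induct) auto

lemma gol_vertex_eq_sign_times_slack:
  assumes "1 \<le> k"
  shows "gol_vertex eps gam sigma k = sigma k * gol_vertex eps gam (sigma(k := 1)) k"
proof -
  consider "k = 1" | "k = 2" | j where "k = j + 3"
    using assms by (metis One_nat_def Suc_1 add.commute add_Suc_right numeral_3_eq_3
        not0_implies_Suc not_one_le_zero plus_1_eq_Suc)
  then show ?thesis
    by cases (simp_all add: gol_vertex_fun_upd_below numeral_2_eq_2 numeral_3_eq_3)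
qed

lemma gol_vertex_fun_upd_self:
  "1 \<le> k \<Longrightarrow> gol_vertex eps gam (sigma(k := c)) k = c * gol_vertex eps gam (sigma(k := 1)) k"
  using gol_vertex_eq_sign_times_slack[of k eps gam "sigma(k := c)"] by simp

lemma gol_vertex_all_minus:
  "1 \<le> j \<Longrightarrow> gol_vertex eps gam (\<lambda>_. -1) j = -1"
  by (induction eps gam "\<lambda>_::nat. -1::real" j rule: gol_vertex.induct)
    (auto simp: numeral_2_eq_2 algebra_simps)

lemma gol_vertex_flip_all_minus:
  "1 \<le> k \<Longrightarrow> gol_vertex eps gam ((\<lambda>_. -1)(k := 1)) k = 1"
  using gol_vertex_eq_sign_times_slack[of k eps gam "\<lambda>_. -1"] gol_vertex_all_minus[of k eps gam]
  by simp

lemma sum_subspace_S: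
  assumes "2 \<le> d" and "x \<in> subspace_S d"
  shows "(\<Sum>k=1..d. v k * x k) = v (d - 1) * x (d - 1) + v d * x d"
proof -
  have "(\<Sum>k=1..d. v k * x k) = (\<Sum>k\<in>{d - 1, d}. v k * x k)"
    using assms by (intro sum.mono_neutral_right) (auto simp: subspace_S_def)
  also have "\<dots> = v (d - 1) * x (d - 1) + v d * x d"
    using assms(1) by simp
  finally show ?thesis .
qed

theorem lemma3:
  fixes eps gam :: real and d :: nat and x :: "nat \<Rightarrow> real"
  assumes "0 < 4 * gam" and "4 * gam < eps" and "eps < 1/2"
    and "2 \<le> d"
    and "x \<in> dual_gol_cube eps gam d" and "x \<in> subspace_S d"
  shows "x (d - 1) \<le> 1"
proof -
  define \<rho> :: "nat \<Rightarrow> real" where "\<rho> = (\<lambda>_. -1)(d - 1 := 1)"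
  define w where "w = gol_vertex eps gam (\<rho>(d := 1)) d"
  have bound: "x (d - 1) + s * w * x d \<le> 1" if "s = 1 \<or> s = -1" for s
  proof -
    have "\<rho>(d := s) \<in> sign_vectors d"
      using that by (auto simp: sign_vectors_def \<rho>_def)
    then have "(\<Sum>k=1..d. gol_vertex eps gam (\<rho>(d := s)) k * x k) \<le> 1"
      using assms(5) by (auto simp: dual_gol_cube_def)
    moreover have "gol_vertex eps gam (\<rho>(d := s)) (d - 1) = 1"
      using assms(4) gol_vertex_fun_upd_below[of "d - 1" d eps gam \<rho> s]
        gol_vertex_flip_all_minus[of "d - 1" eps gam]
      by (simp add: \<rho>_def)
    moreover have "gol_vertex eps gam (\<rho>(d := s)) d = s * w"
      using assms(4) gol_vertex_fun_upd_self[of d eps gam \<rho> s] by (simp only: w_def)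
    ultimately show ?thesis
      using sum_subspace_S[OF assms(4,6)] by simp
  qed
  from bound[of 1] bound[of "-1"] show ?thesis by simp
qed

end
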